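(* Let $\mathcal{F}=\bigcap_{t=1}^k\mathcal{F}^t$ where for each $t\in[k]$, $\mathcal{F}^t\subseteq[0;B]^I$ is a downward-closed subset of $[0;B]^I$. Suppose each $\mathcal{F}^t$ has a monotone $\alpha_t$-CRS with regards to $q$. Then $\mathcal{F}$ has a monotone $\prod_{t=1}^k\alpha_t$-CRS with regards to $q$.
   Context: Let $I=\{1,\dots,n\}$ be a finite set of items and $[0;B]=\{0,1,\dots,B\}$, $[B]=\{1,\dots,B\}$. For $u,v\in[0;B]^I$, $u\le v$ means $u(i)\le v(i)$ for all $i\in I$. A subset $\mathcal{F}\subseteq[0;B]^I$ is downward-closed if $u\le v\in\mathcal{F}$ implies $u\in\mathcal{F}$. Let $q: I\times[0;B]\to[0,1]$ be a probability distribution (for each $i$, $q(i,\cdot)$ sums to 1), and let $v\in[0;B]^I$ be a random vector where, independently for each $i\in I$, $v(i)=j$ with probability $q(i,j)$. For $\alpha\in[0,1]$, an $\alpha$-contention resolution scheme ($\alpha$-CRS) for a downward-closed $\mathcal{F}$ with regards to $q$ is a (possibly randomized) mapping $\psi:[0;B]^I\to\mathcal{F}$ such that (i) for each $i\in I$, $\psi(v)(i)\in\{0,v(i)\}$, and (ii) for each $i\in I$ and $j\in[B]$, $\Pr[\psi(v)(i)=j\mid v(i)=j]\ge\alpha$, where the probability is over both the random choice of $v$ and the internal randomness of $\psi$. An $\alpha$-CRS $\psi$ is monotone if for all $u,v\in[0;B]^I$ with $u(i)=v(i)$ and $u\le v$, $\Pr[\psi(u)(i)=u(i)]\ge\Pr[\psi(v)(i)=v(i)]$,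 where the probability is only over the internal randomness of $\psi$. *)

theory Defs
  imports "HOL-Probability.Probability_Mass_Function"
begin

text \<open>Items are I = {1..n}; vectors in [0;B]^I are extensional functions on I.\<close>
definition vecs :: "nat \<Rightarrow> nat \<Rightarrow> (nat \<Rightarrow> nat) set" where
  "vecs n B = PiE {1..n} (\<lambda>_. {0..B})"

definition down_closed :: "nat \<Rightarrow> nat \<Rightarrow> (nat \<Rightarrow> nat) set \<Rightarrow> bool" where
  "down_closed n B F \<longleftrightarrow> F \<subseteq> vecs n B \<and>
     (\<forall>u v. u \<in> vecs n B \<longrightarrow> v \<in> F \<longrightarrow> (\<forall>i\<in>{1..n}. u i \<le> v i) \<longrightarrow> u \<in> F)"

definition is_dist :: "nat \<Rightarrow> nat \<Rightarrow> (nat \<Rightarrow> nat \<Rightarrow> real) \<Rightarrow> bool" where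
  "is_dist n B q \<longleftrightarrow> (\<forall>i\<in>{1..n}. (\<forall>j\<in>{0..B}. 0 \<le> q i j \<and> q i j \<le> 1) \<and> (\<Sum>j=0..B. q i j) = 1)"

definition vprob :: "nat \<Rightarrow> (nat \<Rightarrow> nat \<Rightarrow> real) \<Rightarrow> (nat \<Rightarrow> nat) \<Rightarrow> real" where
  "vprob n q v = (\<Prod>i\<in>{1..n}. q i (v i))"

text \<open>A randomized scheme is a map from vectors to distributions of output vectors.
  Condition (ii) is stated in the joint form Pr[psi(v)(i)=j and v(i)=j] >= alpha Pr[v(i)=j].\<close>
definition is_CRS :: "nat \<Rightarrow> nat \<Rightarrow> (nat \<Rightarrow> nat) set \<Rightarrow> (nat \<Rightarrow> nat \<Rightarrow> real) \<Rightarrow> real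
    \<Rightarrow> ((nat \<Rightarrow> nat) \<Rightarrow> (nat \<Rightarrow> nat) pmf) \<Rightarrow> bool" where
  "is_CRS n B F q \<alpha> \<psi> \<longleftrightarrow>
     (\<forall>v\<in>vecs n B. \<forall>w\<in>set_pmf (\<psi> v). w \<in> F \<and> (\<forall>i\<in>{1..n}. w i = 0 \<or> w i = v i)) \<and>
     (\<forall>i\<in>{1..n}. \<forall>j\<in>{1..B}.
        (\<Sum>v\<in>{v\<in>vecs n B. v i = j}. vprob n q v * measure_pmf.prob (\<psi> v) {w. w i = j})
          \<ge> \<alpha> * (\<Sum>v\<in>{v\<in>vecs n B. v i = j}. vprob n q v))"

definition monotone_CRS :: "nat \<Rightarrow> nat \<Rightarrow> (nat \<Rightarrow> nat) set \<Rightarrow> (nat \<Rightarrow> nat \<Rightarrow> real) \<Rightarrow> real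
    \<Rightarrow> ((nat \<Rightarrow> nat) \<Rightarrow> (nat \<Rightarrow> nat) pmf) \<Rightarrow> bool" where
  "monotone_CRS n B F q \<alpha> \<psi> \<longleftrightarrow> is_CRS n B F q \<alpha> \<psi> \<and>
     (\<forall>u\<in>vecs n B. \<forall>v\<in>vecs n B. \<forall>i\<in>{1..n}.
        u i = v i \<longrightarrow> (\<forall>l\<in>{1..n}. u l \<le> v l) \<longrightarrow>
        measure_pmf.prob (\<psi> u) {w. w i = u i} \<ge> measure_pmf.prob (\<psi> v) {w. w i = v i})"

end

theory Submission
  imports Defs "HOL-Probability.Product_PMF"
begin

text \<open>Run the schemes for the \<open>F\<^sup>t\<close> independently on the same input and keep an item
  only if every scheme keeps it. The result lies below each scheme's output, hence in every \<open>F\<^sup>t\<close>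
  by downward closure, and for fixed input its keep probability is the product of the individual
  keep probabilities, which gives monotonicity. Conditioned on \<open>v(i) = j\<close>, each factor is a
  decreasing function of the remaining independent coordinates, so by the Harris (FKG) inequality
  for product measures the expected product is at least the product of the expectations,
  i.e. at least \<open>\<Prod>\<^sub>t \<alpha>\<^sub>t\<close>.\<close>

lemma weighted_chebyshev_sum_antimono:
  fixes w F G :: "'a::linorder \<Rightarrow> real"
  assumes "finite X" "\<forall>x\<in>X. 0 \<le> w x" "antimono_on X F" "antimono_on X G"
  shows "(\<Sum>x\<in>X. w x * F x) * (\<Sum>x\<in>X. w x * G x) \<le> (\<Sum>x\<in>X. w x * (F x * G x)) * (\<Sum>x\<in>X. w x)"
proof -
  have swap: "(\<Sum>x\<in>X. \<Sum>y\<in>X. h y x) = (\<Sum>x\<in>X. \<Sum>y\<in>X. h x y)" for h :: "'a \<Rightarrow> 'a \<Rightarrow> real"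
    by (rule sum.swap)
  have "0 \<le> (F x - F y) * (G x - G y)" if "x \<in> X" "y \<in> X" for x y
  proof (cases "x \<le> y")
    case True
    then have "F y \<le> F x" "G y \<le> G x"
      using that monotone_onD[OF assms(3)] monotone_onD[OF assms(4)] by auto
    then show ?thesis by (simp add: mult_nonpos_nonpos)
  next
    case False
    then have "F x \<le> F y" "G x \<le> G y"
      using that monotone_onD[OF assms(3)] monotone_onD[OF assms(4)] by auto
    then show ?thesis by (simp add: mult_nonpos_nonpos)
  qed
  then have "0 \<le> (\<Sum>x\<in>X. \<Sum>y\<in>X. w x * w y * ((F x - F y) * (G x - G y)))"
    using assms(2) by (intro sum_nonneg) simp
  also have "\<dots> = (\<Sum>x\<in>X. \<Sum>y\<in>X. w x * (F x * G x) * w y) + (\<Sum>x\<in>X. \<Sum>y\<in>X. w y * (F y * G y) * w x)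
        - (\<Sum>x\<in>X. \<Sum>y\<in>X. w x * F x * (w y * G y)) - (\<Sum>x\<in>X. \<Sum>y\<in>X. w y * F y * (w x * G x))"
    by (simp add: sum_subtractf[symmetric] sum.distrib[symmetric] algebra_simps)
  also have "\<dots> = 2 * ((\<Sum>x\<in>X. w x * (F x * G x)) * (\<Sum>x\<in>X. w x) - (\<Sum>x\<in>X. w x * F x) * (\<Sum>x\<in>X. w x * G x))"
    unfolding swap[of "\<lambda>y x. w y * (F y * G y) * w x"] swap[of "\<lambda>y x. w y * F y * (w x * G x)"] sum_product
    by simp
  finally show ?thesis by simp
qed

lemma sum_PiE_insert:
  assumes "a \<notin> S"
  shows "(\<Sum>v\<in>PiE (insert a S) A. h v) = (\<Sum>x\<in>A a. \<Sum>v\<in>PiE S A. h (v(a:=x)))"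
proof -
  have "(\<Sum>v\<in>PiE (insert a S) A. h v) = (\<Sum>(x, v)\<in>A a \<times> PiE S A. h (v(a := x)))"
    unfolding PiE_insert_eq sum.reindex[OF inj_combinator[OF assms]] by (simp add: case_prod_beta')
  then show ?thesis by (simp add: sum.cartesian_product)
qed

lemma harris_inequality:
  fixes q :: "'i \<Rightarrow> 'b::linorder \<Rightarrow> real" and f g :: "('i \<Rightarrow> 'b) \<Rightarrow> real"
  assumes "finite S" "\<forall>l\<in>S. finite (A l)" "\<forall>l\<in>S. \<forall>x\<in>A l. 0 \<le> q l x"
    and "antimono_on (PiE S A) f" "antimono_on (PiE S A) g"
  shows "(\<Sum>v\<in>PiE S A. (\<Prod>l\<in>S. q l (v l)) * f v) * (\<Sum>v\<in>PiE S A. (\<Prod>l\<in>S. q l (v l)) * g v)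
     \<le> (\<Sum>v\<in>PiE S A. (\<Prod>l\<in>S. q l (v l)) * (f v * g v)) * (\<Sum>v\<in>PiE S A. (\<Prod>l\<in>S. q l (v l)))"
  using assms
proof (induction S arbitrary: f g rule: finite_induct)
  case empty
  then show ?case by simp
next
  case (insert a S)
  define W where "W v = (\<Prod>l\<in>S. q l (v l))" for v
  \<comment> \<open>unnormalised conditional expectation of \<open>h\<close> given that coordinate \<open>a\<close> equals \<open>x\<close>\<close>
  define E where "E h x = (\<Sum>v\<in>PiE S A. W v * h (v(a:=x)))" for h x
  have W_nonneg: "0 \<le> W v" if "v \<in> PiE S A" for v
    unfolding W_def using that insert.prems(2) by (intro prod_nonneg) auto
  have q_nonneg: "\<forall>x\<in>A a. 0 \<le> q a x"
    using insert.prems(2) by simp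
  have sum_insert: "(\<Sum>v\<in>PiE (insert a S) A. (\<Prod>l\<in>insert a S. q l (v l)) * h v)
      = (\<Sum>x\<in>A a. q a x * E h x)" for h
  proof -
    have "(\<Prod>l\<in>insert a S. q l ((v(a:=x)) l)) = q a x * W v" for v x
      unfolding W_def using insert.hyps by (auto intro!: prod.cong)
    then show ?thesis
      unfolding E_def sum_PiE_insert[OF insert.hyps(2)] by (simp add: sum_distrib_left mult.assoc)
  qed
  have section_antimono: "antimono_on (PiE S A) (\<lambda>v. h (v(a:=x)))"
    if "antimono_on (PiE (insert a S) A) h" "x \<in> A a" for h :: "('i \<Rightarrow> 'b) \<Rightarrow> real" and x
    using that by (intro monotone_onI) (auto intro!: monotone_onD[OF that(1)] PiE_fun_upd simp: le_fun_def)
  have E_antimono: "antimono_on (A a) (E h)" if "antimono_on (PiE (insert a S) A) h" for h :: "('i \<Rightarrow> 'b) \<Rightarrow> real"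
  proof (intro monotone_onI)
    fix x y assume "x \<in> A a" "y \<in> A a" "x \<le> y"
    then have "h (v(a:=y)) \<le> h (v(a:=x))" if "v \<in> PiE S A" for v
      using that by (auto intro!: monotone_onD[OF \<open>antimono_on _ h\<close>] PiE_fun_upd simp: le_fun_def)
    then show "E h y \<le> E h x"
      unfolding E_def by (intro sum_mono mult_left_mono W_nonneg) auto
  qed
  have fiber: "E f x * E g x \<le> E (\<lambda>v. f v * g v) x * E (\<lambda>_. 1) x" if "x \<in> A a" for x
    unfolding E_def W_def mult_1_right using insert.prems that
    by (intro insert.IH section_antimono) auto
  have "(\<Sum>x\<in>A a. q a x * E f x) * (\<Sum>x\<in>A a. q a x * E g x)
      \<le> (\<Sum>x\<in>A a. q a x * (E f x * E g x)) * (\<Sum>x\<in>A a. q a x)"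
    using insert.prems q_nonneg by (intro weighted_chebyshev_sum_antimono E_antimono) auto
  also have "\<dots> \<le> (\<Sum>x\<in>A a. q a x * (E (\<lambda>v. f v * g v) x * E (\<lambda>_. 1) x)) * (\<Sum>x\<in>A a. q a x)"
    using q_nonneg fiber by (intro mult_right_mono sum_mono mult_left_mono sum_nonneg) auto
  also have "\<dots> = (\<Sum>x\<in>A a. q a x * E (\<lambda>v. f v * g v) x) * (\<Sum>x\<in>A a. q a x * E (\<lambda>_. 1) x)"
  proof -
    have "E (\<lambda>_. 1) x = (\<Sum>v\<in>PiE S A. W v)" for x
      by (simp add: E_def)
    then show ?thesis
      by (simp only: mult.assoc[symmetric] sum_distrib_right[symmetric]) (simp only: mult_ac)
  qed
  finally show ?case
    unfolding sum_insert[of f] sum_insert[of g] sum_insert[of "\<lambda>v. f v * g v"]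
      sum_insert[of "\<lambda>_. 1", unfolded mult_1_right] .
qed

lemma harris_inequality_prod:
  fixes q :: "'i \<Rightarrow> 'b::linorder \<Rightarrow> real" and f :: "'t \<Rightarrow> ('i \<Rightarrow> 'b) \<Rightarrow> real"
  assumes "finite T" "finite S" "\<forall>l\<in>S. finite (A l)" "\<forall>l\<in>S. \<forall>x\<in>A l. 0 \<le> q l x"
    and "\<forall>t\<in>T. antimono_on (PiE S A) (f t)" "\<forall>t\<in>T. \<forall>v\<in>PiE S A. 0 \<le> f t v"
  shows "(\<Sum>v\<in>PiE S A. \<Prod>l\<in>S. q l (v l)) * (\<Prod>t\<in>T. \<Sum>v\<in>PiE S A. (\<Prod>l\<in>S. q l (v l)) * f t v)
     \<le> (\<Sum>v\<in>PiE S A. (\<Prod>l\<in>S. q l (v l)) * (\<Prod>t\<in>T. f t v)) * (\<Sum>v\<in>PiE S A. \<Prod>l\<in>S. q l (v l)) ^ card T"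
  using assms(1,5,6)
proof (induction T rule: finite_induct)
  case empty
  then show ?case by simp
next
  case (insert s T)
  define W where "W v = (\<Prod>l\<in>S. q l (v l))" for v
  define Z where "Z = (\<Sum>v\<in>PiE S A. W v)"
  define E where "E h = (\<Sum>v\<in>PiE S A. W v * h v)" for h
  have W_nonneg: "0 \<le> W v" if "v \<in> PiE S A" for v
    unfolding W_def using that assms(4) by (intro prod_nonneg) auto
  have "0 \<le> Z" "0 \<le> E (f s)"
    unfolding Z_def E_def using W_nonneg insert.prems(2) by (auto intro!: sum_nonneg)
  have IH: "Z * (\<Prod>t\<in>T. E (f t)) \<le> E (\<lambda>v. \<Prod>t\<in>T. f t v) * Z ^ card T"
    using insert.IH insert.prems unfolding W_def Z_def E_def by auto
  have "antimono_on (PiE S A) (\<lambda>v. \<Prod>t\<in>T. f t v)"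
    using insert.prems by (intro monotone_onI prod_mono) (auto intro: monotone_onD[of "PiE S A" _ _ "f _"])
  then have harris: "E (f s) * E (\<lambda>v. \<Prod>t\<in>T. f t v) \<le> E (\<lambda>v. f s v * (\<Prod>t\<in>T. f t v)) * Z"
    unfolding E_def Z_def W_def using insert.prems
    by (intro harris_inequality[OF assms(2-4), unfolded mult_1_right]) auto
  have "Z * (\<Prod>t\<in>insert s T. E (f t)) = E (f s) * (Z * (\<Prod>t\<in>T. E (f t)))"
    using insert.hyps by (simp add: mult_ac)
  also have "\<dots> \<le> E (f s) * (E (\<lambda>v. \<Prod>t\<in>T. f t v) * Z ^ card T)"
    using IH \<open>0 \<le> E (f s)\<close> by (rule mult_left_mono)
  also have "\<dots> \<le> E (\<lambda>v. f s v * (\<Prod>t\<in>T. f t v)) * Z * Z ^ card T"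
    using harris \<open>0 \<le> Z\<close> by (simp add: mult.assoc[symmetric] mult_right_mono)
  also have "\<dots> = E (\<lambda>v. \<Prod>t\<in>insert s T. f t v) * Z ^ card (insert s T)"
    using insert.hyps by (simp add: mult_ac)
  finally show ?case
    unfolding E_def Z_def W_def .
qed

definition kept_by_all :: "nat \<Rightarrow> 't set \<Rightarrow> (nat \<Rightarrow> nat) \<Rightarrow> ('t \<Rightarrow> nat \<Rightarrow> nat) \<Rightarrow> nat \<Rightarrow> nat" where
  "kept_by_all n T v \<omega> =
     (\<lambda>i. if i \<in> {1..n} then if \<forall>t\<in>T. \<omega> t i = v i then v i else 0 else undefined)"

definition intersection_scheme ::
    "nat \<Rightarrow> 't set \<Rightarrow> ('t \<Rightarrow> (nat \<Rightarrow> nat) \<Rightarrow> (nat \<Rightarrow> nat) pmf) \<Rightarrow> (nat \<Rightarrow> nat) \<Rightarrow> (nat \<Rightarrow> nat) pmf" where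
  "intersection_scheme n T \<Psi> v = map_pmf (kept_by_all n T v) (Pi_pmf T undefined (\<lambda>t. \<Psi> t v))"

lemma vecs_le_iff:
  assumes "u \<in> vecs n B" "v \<in> vecs n B"
  shows "u \<le> v \<longleftrightarrow> (\<forall>l\<in>{1..n}. u l \<le> v l)"
  using assms by (auto simp: vecs_def le_fun_def PiE_def extensional_def)

lemma set_pmf_intersection_scheme:
  assumes "finite T" "v \<in> vecs n B"
    and "\<forall>t\<in>T. is_CRS n B (Fs t) q (\<alpha> t) (\<Psi> t)" "\<forall>t\<in>T. down_closed n B (Fs t)"
    and "w \<in> set_pmf (intersection_scheme n T \<Psi> v)"
  shows "w \<in> (\<Inter>t\<in>T. Fs t) \<and> (\<forall>i\<in>{1..n}. w i = 0 \<or> w i = v i)"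
proof -
  obtain \<omega> where \<omega>: "\<omega> \<in> set_pmf (Pi_pmf T undefined (\<lambda>t. \<Psi> t v))" and w: "w = kept_by_all n T v \<omega>"
    using assms(5) unfolding intersection_scheme_def by auto
  have w_vecs: "w \<in> vecs n B"
    using assms(2) unfolding w kept_by_all_def vecs_def by (auto simp: PiE_def extensional_def)
  have "w \<in> Fs t" if t: "t \<in> T" for t
  proof -
    have "\<omega> t \<in> set_pmf (\<Psi> t v)"
      using \<omega> t assms(1) by (auto simp: set_Pi_pmf PiE_dflt_def)
    then have "\<omega> t \<in> Fs t"
      using assms(2,3) t unfolding is_CRS_def by blast
    moreover have "\<forall>l\<in>{1..n}. w l \<le> \<omega> t l"
      using t unfolding w kept_by_all_def by auto
    ultimately show ?thesis
      using assms(4) t w_vecs unfolding down_closed_def by blast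
  qed
  then show ?thesis
    unfolding w kept_by_all_def by auto
qed

lemma prob_intersection_scheme_keep:
  assumes "finite T" "i \<in> {1..n}" "v i \<noteq> 0"
  shows "measure_pmf.prob (intersection_scheme n T \<Psi> v) {w. w i = v i}
    = (\<Prod>t\<in>T. measure_pmf.prob (\<Psi> t v) {w. w i = v i})"
proof -
  have "kept_by_all n T v -` {w. w i = v i} = Pi T (\<lambda>t. {w. w i = v i})"
    using assms(2,3) unfolding kept_by_all_def by (auto simp: Pi_def)
  then show ?thesis
    unfolding intersection_scheme_def using assms(1) by (simp add: measure_Pi_pmf_Pi)
qed

lemma prob_intersection_scheme_keep_zero:
  assumes "i \<in> {1..n}" "v i = 0"
  shows "measure_pmf.prob (intersection_scheme n T \<Psi> v) {w. w i = v i} = 1"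
proof -
  have "kept_by_all n T v -` {w. w i = v i} = UNIV"
    using assms unfolding kept_by_all_def by auto
  then show ?thesis
    unfolding intersection_scheme_def by simp
qed

lemma intersection_scheme_keep_prob_mono:
  assumes "finite T" "\<forall>t\<in>T. monotone_CRS n B (Fs t) q (\<alpha> t) (\<Psi> t)"
    and "u \<in> vecs n B" "v \<in> vecs n B" "i \<in> {1..n}" "u i = v i" "\<forall>l\<in>{1..n}. u l \<le> v l"
  shows "measure_pmf.prob (intersection_scheme n T \<Psi> v) {w. w i = v i}
    \<le> measure_pmf.prob (intersection_scheme n T \<Psi> u) {w. w i = u i}"
proof (cases "u i = 0")
  case True
  then show ?thesis
    using prob_intersection_scheme_keep_zero[where v=u and T=T and \<Psi>=\<Psi>, OF assms(5) True] measure_pmf.prob_le_1 by metis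
next
  case False
  have "(\<Prod>t\<in>T. measure_pmf.prob (\<Psi> t v) {w. w i = v i}) \<le> (\<Prod>t\<in>T. measure_pmf.prob (\<Psi> t u) {w. w i = u i})"
    using assms(2-) unfolding monotone_CRS_def by (intro prod_mono) auto
  moreover have "v i \<noteq> 0"
    using False assms(6) by simp
  ultimately show ?thesis
    using prob_intersection_scheme_keep[where v=u, OF assms(1,5) False]
      prob_intersection_scheme_keep[where v=v, OF assms(1,5) \<open>v i \<noteq> 0\<close>]
    by simp
qed

lemma monotone_CRS_keep_prob_antimono:
  assumes "monotone_CRS n B F q \<alpha> \<psi>" "i \<in> {1..n}"
  shows "antimono_on {v \<in> vecs n B. v i = j} (\<lambda>v. measure_pmf.prob (\<psi> v) {w. w i = j})"
proof (intro monotone_onI)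
  fix u v assume u: "u \<in> {v \<in> vecs n B. v i = j}" and v: "v \<in> {v \<in> vecs n B. v i = j}" and "u \<le> v"
  then have "\<forall>l\<in>{1..n}. u l \<le> v l"
    using vecs_le_iff by blast
  moreover have "\<forall>u\<in>vecs n B. \<forall>v\<in>vecs n B. \<forall>i\<in>{1..n}. u i = v i \<longrightarrow> (\<forall>l\<in>{1..n}. u l \<le> v l) \<longrightarrow>
      measure_pmf.prob (\<psi> v) {w. w i = v i} \<le> measure_pmf.prob (\<psi> u) {w. w i = u i}"
    using assms(1) unfolding monotone_CRS_def by blast
  ultimately have "measure_pmf.prob (\<psi> v) {w. w i = v i} \<le> measure_pmf.prob (\<psi> u) {w. w i = u i}"
    using u v assms(2) by (metis (mono_tags, lifting) mem_Collect_eq)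
  then show "measure_pmf.prob (\<psi> v) {w. w i = j} \<le> measure_pmf.prob (\<psi> u) {w. w i = j}"
    using u v by simp
qed

lemma intersection_scheme_keep_bound:
  assumes "finite T" "is_dist n B q" "\<forall>t\<in>T. 0 \<le> \<alpha> t"
    and "\<forall>t\<in>T. monotone_CRS n B (Fs t) q (\<alpha> t) (\<Psi> t)" "i \<in> {1..n}" "j \<in> {1..B}"
  shows "(\<Prod>t\<in>T. \<alpha> t) * (\<Sum>v\<in>{v\<in>vecs n B. v i = j}. vprob n q v)
    \<le> (\<Sum>v\<in>{v\<in>vecs n B. v i = j}. vprob n q v * measure_pmf.prob (intersection_scheme n T \<Psi> v) {w. w i = j})"
proof -
  define A where "A l = (if l = i then {j} else {0..B})" for l :: nat
  define V where "V = {v\<in>vecs n B. v i = j}"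
  define Z where "Z = (\<Sum>v\<in>V. vprob n q v)"
  define f where "f t v = measure_pmf.prob (\<Psi> t v) {w. w i = j}" for t v
  have V_PiE: "V = PiE {1..n} A"
    using assms(5,6) unfolding V_def vecs_def A_def by (auto simp: PiE_def Pi_def)
  have q_nonneg: "\<forall>l\<in>{1..n}. \<forall>x\<in>A l. 0 \<le> q l x"
    using assms(2,6) unfolding is_dist_def A_def by auto
  have "0 \<le> Z"
    unfolding Z_def V_PiE vprob_def using q_nonneg by (auto intro!: sum_nonneg prod_nonneg)
  have each: "\<alpha> t * Z \<le> (\<Sum>v\<in>V. vprob n q v * f t v)" if "t \<in> T" for t
    using assms(4-6) that unfolding monotone_CRS_def is_CRS_def Z_def V_def f_def by auto
  have harris: "Z * (\<Prod>t\<in>T. \<Sum>v\<in>V. vprob n q v * f t v) \<le> (\<Sum>v\<in>V. vprob n q v * (\<Prod>t\<in>T. f t v)) * Z ^ card T"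
    unfolding Z_def V_PiE vprob_def
  proof (intro harris_inequality_prod assms(1) q_nonneg ballI)
    show "finite (A l)" for l
      unfolding A_def by simp
    show "antimono_on (PiE {1..n} A) (f t)" if "t \<in> T" for t
      using monotone_CRS_keep_prob_antimono[OF _ assms(5)] assms(4) that
      unfolding f_def V_PiE[unfolded V_def, symmetric] by blast
    show "0 \<le> f t v" for t v
      unfolding f_def by simp
  qed simp
  have "Z ^ card T * ((\<Prod>t\<in>T. \<alpha> t) * Z) = Z * (\<Prod>t\<in>T. \<alpha> t * Z)"
    by (simp add: prod.distrib mult_ac)
  also have "\<dots> \<le> Z * (\<Prod>t\<in>T. \<Sum>v\<in>V. vprob n q v * f t v)"
    using each assms(3) \<open>0 \<le> Z\<close> by (intro mult_left_mono prod_mono) auto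
  also have "\<dots> \<le> Z ^ card T * (\<Sum>v\<in>V. vprob n q v * (\<Prod>t\<in>T. f t v))"
    using harris by (simp add: mult.commute)
  finally have scaled: "Z ^ card T * ((\<Prod>t\<in>T. \<alpha> t) * Z) \<le> Z ^ card T * (\<Sum>v\<in>V. vprob n q v * (\<Prod>t\<in>T. f t v))" .
  have "0 \<le> (\<Sum>v\<in>V. vprob n q v * (\<Prod>t\<in>T. f t v))"
    unfolding V_PiE vprob_def f_def using q_nonneg by (auto intro!: sum_nonneg mult_nonneg_nonneg prod_nonneg)
  then have "(\<Prod>t\<in>T. \<alpha> t) * Z \<le> (\<Sum>v\<in>V. vprob n q v * (\<Prod>t\<in>T. f t v))"
    using scaled \<open>0 \<le> Z\<close> by (cases "Z = 0") auto
  also have "\<dots> = (\<Sum>v\<in>V. vprob n q v * measure_pmf.prob (intersection_scheme n T \<Psi> v) {w. w i = j})"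
    using prob_intersection_scheme_keep[OF assms(1,5)] assms(6) unfolding V_def f_def
    by (intro sum.cong) auto
  finally show ?thesis
    unfolding Z_def V_def .
qed

lemma monotone_CRS_intersection_scheme:
  assumes "finite T" "is_dist n B q" "\<forall>t\<in>T. down_closed n B (Fs t)" "\<forall>t\<in>T. 0 \<le> \<alpha> t"
    and "\<forall>t\<in>T. monotone_CRS n B (Fs t) q (\<alpha> t) (\<Psi> t)"
  shows "monotone_CRS n B (\<Inter>t\<in>T. Fs t) q (\<Prod>t\<in>T. \<alpha> t) (intersection_scheme n T \<Psi>)"
proof -
  have "\<forall>t\<in>T. is_CRS n B (Fs t) q (\<alpha> t) (\<Psi> t)"
    using assms(5) unfolding monotone_CRS_def by blast
  then have "\<forall>v\<in>vecs n B. \<forall>w\<in>set_pmf (intersection_scheme n T \<Psi> v).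
      w \<in> (\<Inter>t\<in>T. Fs t) \<and> (\<forall>i\<in>{1..n}. w i = 0 \<or> w i = v i)"
    using set_pmf_intersection_scheme[OF assms(1) _ _ assms(3)] by blast
  moreover have "\<forall>i\<in>{1..n}. \<forall>j\<in>{1..B}. (\<Prod>t\<in>T. \<alpha> t) * (\<Sum>v\<in>{v\<in>vecs n B. v i = j}. vprob n q v)
      \<le> (\<Sum>v\<in>{v\<in>vecs n B. v i = j}. vprob n q v * measure_pmf.prob (intersection_scheme n T \<Psi> v) {w. w i = j})"
    using intersection_scheme_keep_bound[OF assms(1,2,4,5)] by blast
  moreover have "\<forall>u\<in>vecs n B. \<forall>v\<in>vecs n B. \<forall>i\<in>{1..n}. u i = v i \<longrightarrow> (\<forall>l\<in>{1..n}. u l \<le> v l) \<longrightarrow>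
      measure_pmf.prob (intersection_scheme n T \<Psi> v) {w. w i = v i}
      \<le> measure_pmf.prob (intersection_scheme n T \<Psi> u) {w. w i = u i}"
    using intersection_scheme_keep_prob_mono[OF assms(1,5)] by blast
  ultimately show ?thesis
    unfolding monotone_CRS_def is_CRS_def by blast
qed

theorem lemma2:
  fixes n B k :: nat and q :: "nat \<Rightarrow> nat \<Rightarrow> real"
    and Fs :: "nat \<Rightarrow> (nat \<Rightarrow> nat) set" and \<alpha> :: "nat \<Rightarrow> real"
  assumes "k \<ge> 1"
    and "is_dist n B q"
    and "\<forall>t\<in>{1..k}. down_closed n B (Fs t)"
    and "\<forall>t\<in>{1..k}. 0 \<le> \<alpha> t \<and> \<alpha> t \<le> 1"
    and "\<forall>t\<in>{1..k}. \<exists>\<psi>. monotone_CRS n B (Fs t) q (\<alpha> t) \<psi>"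
  shows "\<exists>\<psi>. monotone_CRS n B (\<Inter>t\<in>{1..k}. Fs t) q (\<Prod>t=1..k. \<alpha> t) \<psi>"
proof -
  obtain \<Psi> where "\<forall>t\<in>{1..k}. monotone_CRS n B (Fs t) q (\<alpha> t) (\<Psi> t)"
    using assms(5) by metis
  then have "monotone_CRS n B (\<Inter>t\<in>{1..k}. Fs t) q (\<Prod>t=1..k. \<alpha> t) (intersection_scheme n {1..k} \<Psi>)"
    using assms(2-4) by (intro monotone_CRS_intersection_scheme) auto
  then show ?thesis by blast
qed

end
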